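(* Probabilistic circuits and diagonal positive unital circuits over a given partition circuit are isomorphic, in the sense that: (i) for every diagonal positive unital circuit there is a probabilistic circuit over the same partition circuit with $P_k(\mathbf{x}_k)=\operatorname{diagvec}(O_k(\mathbf{x}_k))$ for every unit $k$ and every assignment $\mathbf{x}_k$; and (ii) conversely, for every probabilistic circuit there is a diagonal positive unital circuit over the same partition circuit with $\operatorname{diagvec}(O_k(\mathbf{x}_k))=P_k(\mathbf{x}_k)$ for every unit $k$ and every $\mathbf{x}_k$. Here $\operatorname{diagvec}(A)$ is the vector of diagonal entries of $A$.
   Context: A partition circuit over discrete variables $\mathbf{x}=\{x_0,\dots,x_{N-1}\}$ is a rooted binary tree whose leaves are in bijection with the variables (leaf $k$ carries $x_k$ with finite value set $\Omega(X_k)$), each internal unit $k$ having two children $k_l,k_r$; $\mathbf{x}_k$ denotes an assignment to the variables at leaves below $k$. Probabilistic circuit: to each leaf $k$ real vectors $P_{x_k}$ with nonnegative entries and $\sum_{x_k}P_{x_k}=(1,\dots,1)^T$, $P_k(\mathbf{x}_k)=P_{x_k}$; to each internal unit $k$ a real nonnegative row-stochastic matrix $W_k$ (rows sum to 1), $P_k(\mathbf{x}_k)=W_k(P_{k_l}(\mathbf{x}_{k_l})\otimes P_{k_r}(\mathbf{x}_{k_r}))$, $\otimes$ Kronecker product. Diagonal positive unital circuit: to each leaf $k$ diagonal complex matrices $\Delta_{x_k}$ with $\sum_{x_k}\Delta_{x_k}\Delta_{x_k}^*=\mathbb{1}$, $O_k(\mathbf{x}_k)=\Delta_{x_k}\Delta_{x_k}^*$;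 to each internal unit $k$ with input size $n$ (size of $O_{k_l}\otimes O_{k_r}$) and output size $m$, diagonal $n\times n$ matrices $D_{kj}$ ($j=1,\dots,m$) with $\operatorname{Tr}[D_{kj}D_{kj}^*]=1$, and $O_k(\mathbf{x}_k)=\sum_{j=1}^mJ_jD_{kj}(O_{k_l}(\mathbf{x}_{k_l})\otimes O_{k_r}(\mathbf{x}_{k_r}))D_{kj}^*J_j^*$, where $J_j$ is the $m\times n$ matrix whose $j$-th row is all ones and other entries zero. *)

theory Defs
  imports Complex_Main "Jordan_Normal_Form.Matrix"
begin

datatype ptree = PLeaf nat | PNode ptree ptree

fun leaf_vars :: "ptree \<Rightarrow> nat list" where
  "leaf_vars (PLeaf k) = [k]"
| "leaf_vars (PNode l r) = leaf_vars l @ leaf_vars r"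

definition partition_circuit :: "nat \<Rightarrow> ptree \<Rightarrow> bool" where
  "partition_circuit N T \<longleftrightarrow> distinct (leaf_vars T) \<and> set (leaf_vars T) = {..<N}"

text \<open>Circuits over a partition circuit: the same tree, annotated with leaf data of
  type 'a and internal-unit data of type 'b.\<close>
datatype ('a, 'b) atree = ALeaf nat 'a | ANode 'b "('a, 'b) atree" "('a, 'b) atree"

fun shape :: "('a, 'b) atree \<Rightarrow> ptree" where
  "shape (ALeaf k a) = PLeaf k"
| "shape (ANode b l r) = PNode (shape l) (shape r)"

text \<open>Units of a partition circuit are identified by their path from the root
  (False = left child, True = right child).\<close>
fun units :: "ptree \<Rightarrow> bool list set" where
  "units (PLeaf k) = {[]}"
| "units (PNode l r) = insert [] ((Cons False) ` units l \<union> (Cons True) ` units r)"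

fun sub_at :: "('a, 'b) atree \<Rightarrow> bool list \<Rightarrow> ('a, 'b) atree" where
  "sub_at t [] = t"
| "sub_at (ANode b l r) (False # p) = sub_at l p"
| "sub_at (ANode b l r) (True # p) = sub_at r p"
| "sub_at (ALeaf k a) (d # p) = ALeaf k a"

abbreviation avars :: "('a, 'b) atree \<Rightarrow> nat set" where
  "avars t \<equiv> set (leaf_vars (shape t))"

definition kron_vec :: "'a::times vec \<Rightarrow> 'a vec \<Rightarrow> 'a vec" where
  "kron_vec u v = vec (dim_vec u * dim_vec v)
     (\<lambda>i. u $ (i div dim_vec v) * v $ (i mod dim_vec v))"

definition kron_mat :: "'a::times mat \<Rightarrow> 'a mat \<Rightarrow> 'a mat" where
  "kron_mat A B = mat (dim_row A * dim_row B) (dim_col A * dim_col B)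
     (\<lambda>(i, j). A $$ (i div dim_row B, j div dim_col B) * B $$ (i mod dim_row B, j mod dim_col B))"

definition ctrans :: "complex mat \<Rightarrow> complex mat" where
  "ctrans A = mat (dim_col A) (dim_row A) (\<lambda>(i, j). cnj (A $$ (j, i)))"

definition mtrace :: "'a::comm_monoid_add mat \<Rightarrow> 'a" where
  "mtrace A = (\<Sum>i<dim_row A. A $$ (i, i))"

definition vsum :: "nat \<Rightarrow> 's set \<Rightarrow> ('s \<Rightarrow> 'a::comm_monoid_add vec) \<Rightarrow> 'a vec" where
  "vsum d S f = vec d (\<lambda>i. \<Sum>s\<in>S. f s $ i)"

definition msum :: "nat \<Rightarrow> nat \<Rightarrow> 's set \<Rightarrow> ('s \<Rightarrow> 'a::comm_monoid_add mat) \<Rightarrow> 'a mat" where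
  "msum nr nc S f = mat nr nc (\<lambda>(i, j). \<Sum>s\<in>S. f s $$ (i, j))"

text \<open>J_j: the m x n matrix whose j-th row is all ones (0-based j).\<close>
definition Jmat :: "nat \<Rightarrow> nat \<Rightarrow> nat \<Rightarrow> complex mat" where
  "Jmat m n j = mat m n (\<lambda>(i, c). if i = j then 1 else 0)"

definition diagvec :: "'a mat \<Rightarrow> 'a vec" where
  "diagvec A = vec (dim_row A) (\<lambda>i. A $$ (i, i))"

text \<open>Leaf data: (dimension d, x \<mapsto> P_x); internal data: W_k.\<close>
type_synonym 'v prob_circuit = "(nat \<times> ('v \<Rightarrow> real vec), real mat) atree"

fun pdim :: "'v prob_circuit \<Rightarrow> nat" where
  "pdim (ALeaf k (d, P)) = d"
| "pdim (ANode W l r) = dim_row W"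

fun prob_circuit :: "(nat \<Rightarrow> 'v set) \<Rightarrow> 'v prob_circuit \<Rightarrow> bool" where
  "prob_circuit \<Omega> (ALeaf k (d, P)) \<longleftrightarrow>
     (\<forall>x\<in>\<Omega> k. P x \<in> carrier_vec d \<and> (\<forall>i<d. P x $ i \<ge> 0))
     \<and> vsum d (\<Omega> k) P = vec d (\<lambda>i. 1)"
| "prob_circuit \<Omega> (ANode W l r) \<longleftrightarrow>
     W \<in> carrier_mat (dim_row W) (pdim l * pdim r)
     \<and> (\<forall>i<dim_row W. \<forall>j<dim_col W. W $$ (i, j) \<ge> 0)
     \<and> (\<forall>i<dim_row W. (\<Sum>j<dim_col W. W $$ (i, j)) = 1)
     \<and> prob_circuit \<Omega> l \<and> prob_circuit \<Omega> r"

text \<open>P_k(x_k), evaluated at a (total) assignment x; only the variables below k matter.\<close>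
fun peval :: "'v prob_circuit \<Rightarrow> (nat \<Rightarrow> 'v) \<Rightarrow> real vec" where
  "peval (ALeaf k (d, P)) x = P (x k)"
| "peval (ANode W l r) x = W *\<^sub>v kron_vec (peval l x) (peval r x)"

text \<open>Leaf data: (dimension d, x \<mapsto> Delta_x); internal data: (output size m, j \<mapsto> D_kj),
  where j ranges over 0..m-1 (the paper's 1..m).\<close>
type_synonym 'v dpu_circuit = "(nat \<times> ('v \<Rightarrow> complex mat), nat \<times> (nat \<Rightarrow> complex mat)) atree"

fun ddim :: "'v dpu_circuit \<Rightarrow> nat" where
  "ddim (ALeaf k (d, \<Delta>)) = d"
| "ddim (ANode (m, D) l r) = m"

fun dpu_circuit :: "(nat \<Rightarrow> 'v set) \<Rightarrow> 'v dpu_circuit \<Rightarrow> bool" where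
  "dpu_circuit \<Omega> (ALeaf k (d, \<Delta>)) \<longleftrightarrow>
     (\<forall>x\<in>\<Omega> k. \<Delta> x \<in> carrier_mat d d \<and> diagonal_mat (\<Delta> x))
     \<and> msum d d (\<Omega> k) (\<lambda>x. \<Delta> x * ctrans (\<Delta> x)) = 1\<^sub>m d"
| "dpu_circuit \<Omega> (ANode (m, D) l r) \<longleftrightarrow>
     (\<forall>j<m. D j \<in> carrier_mat (ddim l * ddim r) (ddim l * ddim r)
            \<and> diagonal_mat (D j) \<and> mtrace (D j * ctrans (D j)) = 1)
     \<and> dpu_circuit \<Omega> l \<and> dpu_circuit \<Omega> r"

text \<open>O_k(x_k), evaluated at a (total) assignment x.\<close>
fun oeval :: "'v dpu_circuit \<Rightarrow> (nat \<Rightarrow> 'v) \<Rightarrow> complex mat" where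
  "oeval (ALeaf k (d, \<Delta>)) x = \<Delta> (x k) * ctrans (\<Delta> (x k))"
| "oeval (ANode (m, D) l r) x =
     msum m m {..<m} (\<lambda>j. Jmat m (ddim l * ddim r) j * D j
                          * kron_mat (oeval l x) (oeval r x)
                          * ctrans (D j) * ctrans (Jmat m (ddim l * ddim r) j))"

end

theory Submission
  imports Defs
begin

text \<open>Everything in either kind of circuit is diagonal, and for a diagonal matrix
  \<open>M\<close> the product \<open>M M\<^sup>*\<close> is diagonal with entries \<open>|M\<^sub>i\<^sub>i|\<^sup>2\<close>.
  So a diagonal positive unital circuit yields a probabilistic one by
  \<open>P\<^sub>x(i) = |\<Delta>\<^sub>x(i,i)|\<^sup>2\<close> and \<open>W\<^sub>k(j,a) = |D\<^sub>k\<^sub>j(a,a)|\<^sup>2\<close>, and square roots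
  invert this. The unitality conditions \<open>\<Sum>\<^sub>x \<Delta>\<^sub>x\<Delta>\<^sub>x\<^sup>* = 1\<close> and \<open>Tr(D\<^sub>k\<^sub>jD\<^sub>k\<^sub>j\<^sup>*) = 1\<close>
  then become \<open>\<Sum>\<^sub>x P\<^sub>x = 1\<close> and the row sums of \<open>W\<^sub>k\<close>. By induction over the tree,
  \<open>O\<^sub>k(x\<^sub>k)\<close> is the diagonal matrix with diagonal \<open>P\<^sub>k(x\<^sub>k)\<close>: the Kronecker product
  of diagonal matrices is diagonal with the Kronecker product of the diagonals, and
  \<open>J\<^sub>j D K D\<^sup>* J\<^sub>j\<^sup>*\<close> has the single nonzero entry \<open>\<Sum>\<^sub>a |D(a,a)|\<^sup>2 K(a,a)\<close> at \<open>(j,j)\<close>,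
  which is the \<open>j\<close>-th entry of \<open>W\<^sub>k\<close> applied to that Kronecker product.\<close>

lemma dim_mat_diag [simp]: "dim_row (mat_diag n f) = n" "dim_col (mat_diag n f) = n"
  by (simp_all add: mat_diag_def)

lemma mat_diag_cong: "(\<And>i. i < n \<Longrightarrow> f i = g i) \<Longrightarrow> mat_diag n f = mat_diag n g"
  by (rule eq_matI) (auto simp: mat_diag_def)

lemma mat_diag_index [simp]: "i < n \<Longrightarrow> j < n \<Longrightarrow> mat_diag n f $$ (i, j) = (if i = j then f i else 0)"
  by (simp add: mat_diag_def)

lemma diagonal_mat_eq_mat_diag:
  assumes "A \<in> carrier_mat n n" "diagonal_mat A"
  shows "A = mat_diag n (\<lambda>i. A $$ (i, i))"
  using assms by (intro eq_matI) (auto simp: diagonal_mat_def)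

lemma diagvec_mat_diag [simp]: "diagvec (mat_diag n f) = vec n f"
  by (rule eq_vecI) (auto simp: diagvec_def mat_diag_def)

lemma mtrace_mat_diag [simp]: "mtrace (mat_diag n f) = (\<Sum>i<n. f i)"
  by (simp add: mtrace_def mat_diag_def)

lemma ctrans_mat_diag [simp]: "ctrans (mat_diag n f) = mat_diag n (\<lambda>i. cnj (f i))"
  by (rule eq_matI) (auto simp: ctrans_def mat_diag_def)

lemma mat_diag_mult_ctrans:
  "mat_diag n f * ctrans (mat_diag n f) = mat_diag n (\<lambda>i. of_real ((cmod (f i))\<^sup>2))"
  by (simp only: ctrans_mat_diag mat_diag_diag complex_norm_square)

lemma diagonal_mat_mat_diag: "diagonal_mat (mat_diag n f)"
  by (simp add: diagonal_mat_def)

lemma diagonal_mult_ctrans: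
  assumes "A \<in> carrier_mat n n" "diagonal_mat A"
  shows "A * ctrans A = mat_diag n (\<lambda>i. of_real ((cmod (A $$ (i, i)))\<^sup>2))"
  using mat_diag_mult_ctrans[of n "\<lambda>i. A $$ (i, i)"]
  by (simp only: diagonal_mat_eq_mat_diag[OF assms, symmetric])

lemma mat_diag_sqrt_mult_ctrans:
  assumes "\<And>i. i < n \<Longrightarrow> f i \<ge> 0"
  shows "mat_diag n (\<lambda>i. of_real (sqrt (f i))) * ctrans (mat_diag n (\<lambda>i. of_real (sqrt (f i))))
       = mat_diag n (\<lambda>i. of_real (f i))"
  using assms by (auto simp flip: of_real_mult intro!: mat_diag_cong)

lemma msum_mat_diag: "msum n n S (\<lambda>s. mat_diag n (f s)) = mat_diag n (\<lambda>i. \<Sum>s\<in>S. f s i)"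
  by (rule eq_matI) (auto simp: msum_def mat_diag_def)

lemma msum_cong: "(\<And>s. s \<in> S \<Longrightarrow> f s = g s) \<Longrightarrow> msum nr nc S f = msum nr nc S g"
  by (simp add: msum_def)

lemma kron_mat_diag:
  fixes f g :: "nat \<Rightarrow> 'a::mult_zero"
  shows "kron_mat (mat_diag a f) (mat_diag b g) = mat_diag (a * b) (\<lambda>i. f (i div b) * g (i mod b))"
proof (rule eq_matI)
  fix i j assume "i < dim_row (mat_diag (a * b) (\<lambda>i. f (i div b) * g (i mod b)))"
    "j < dim_col (mat_diag (a * b) (\<lambda>i. f (i div b) * g (i mod b)))"
  then have ij: "i < a * b" "j < a * b" by auto
  then have "b > 0" by (cases b) auto
  with ij have "i div b < a" "j div b < a" "i mod b < b" "j mod b < b"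
    by (auto simp: less_mult_imp_div_less mult.commute)
  moreover have "i = j \<longleftrightarrow> i div b = j div b \<and> i mod b = j mod b"
    by (metis div_mult_mod_eq)
  ultimately show "kron_mat (mat_diag a f) (mat_diag b g) $$ (i, j) =
      mat_diag (a * b) (\<lambda>i. f (i div b) * g (i mod b)) $$ (i, j)"
    using ij by (auto simp: kron_mat_def)
qed (auto simp: kron_mat_def)

lemma Jmat_mult_mat_diag_mult_ctrans:
  "Jmat m n j * mat_diag n g * ctrans (Jmat m n j) = mat_diag m (\<lambda>i. if i = j then (\<Sum>b<n. g b) else 0)"
proof -
  have "Jmat m n j * mat_diag n g = mat m n (\<lambda>(i, c). if i = j then g c else 0)"
    by (subst mat_diag_mult_right[of _ m]) (auto simp: Jmat_def)
  then show ?thesis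
    by (intro eq_matI) (auto simp: Jmat_def ctrans_def scalar_prod_def atLeast0LessThan)
qed

lemma oeval_ANode_mat_diag:
  assumes D: "\<And>j. j < m \<Longrightarrow> D j = mat_diag (ddim l * ddim r) (d j)"
    and l: "oeval l x = mat_diag (ddim l) f" and r: "oeval r x = mat_diag (ddim r) g"
  shows "oeval (ANode (m, D) l r) x = mat_diag m (\<lambda>j. \<Sum>b<ddim l * ddim r.
           of_real ((cmod (d j b))\<^sup>2) * (f (b div ddim r) * g (b mod ddim r)))"
    (is "_ = mat_diag m ?s")
proof -
  define n where "n = ddim l * ddim r"
  define k where "k = (\<lambda>b. f (b div ddim r) * g (b mod ddim r))"
  have K: "kron_mat (oeval l x) (oeval r x) = mat_diag n k"
    unfolding l r kron_mat_diag n_def k_def ..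
  have summand: "Jmat m n j * D j * mat_diag n k * ctrans (D j) * ctrans (Jmat m n j)
      = mat_diag m (\<lambda>i. if i = j then ?s j else 0)" if "j < m" for j
  proof -
    have J: "Jmat m n j \<in> carrier_mat m n" by (simp add: Jmat_def)
    have "Jmat m n j * D j * mat_diag n k * ctrans (D j)
        = Jmat m n j * (D j * mat_diag n k * ctrans (D j))"
      unfolding D[OF that, folded n_def] using J
      by (simp add: assoc_mult_mat[of _ m n _ n _ n])
    also have "D j * mat_diag n k * ctrans (D j) = mat_diag n (\<lambda>b. of_real ((cmod (d j b))\<^sup>2) * k b)"
      unfolding D[OF that, folded n_def]
      by (simp add: complex_norm_square mult_ac del: of_real_power)
    finally show ?thesis
      by (simp add: Jmat_mult_mat_diag_mult_ctrans n_def k_def del: of_real_power)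
  qed
  have "oeval (ANode (m, D) l r) x = msum m m {..<m} (\<lambda>j. mat_diag m (\<lambda>i. if i = j then ?s j else 0))"
    unfolding oeval.simps K[unfolded n_def] by (rule msum_cong) (simp add: summand[unfolded n_def])
  also have "\<dots> = mat_diag m ?s"
    unfolding msum_mat_diag by (rule mat_diag_cong) simp
  finally show ?thesis .
qed

fun prob_of_dpu :: "'v dpu_circuit \<Rightarrow> 'v prob_circuit" where
  "prob_of_dpu (ALeaf k (d, \<Delta>)) = ALeaf k (d, \<lambda>x. vec d (\<lambda>i. (cmod (\<Delta> x $$ (i, i)))\<^sup>2))"
| "prob_of_dpu (ANode (m, D) l r) =
     ANode (mat m (ddim l * ddim r) (\<lambda>(j, a). (cmod (D j $$ (a, a)))\<^sup>2)) (prob_of_dpu l) (prob_of_dpu r)"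

fun dpu_of_prob :: "'v prob_circuit \<Rightarrow> 'v dpu_circuit" where
  "dpu_of_prob (ALeaf k (d, P)) = ALeaf k (d, \<lambda>x. mat_diag d (\<lambda>i. of_real (sqrt (P x $ i))))"
| "dpu_of_prob (ANode W l r) =
     ANode (dim_row W, \<lambda>j. mat_diag (pdim l * pdim r) (\<lambda>a. of_real (sqrt (W $$ (j, a)))))
       (dpu_of_prob l) (dpu_of_prob r)"

lemma shape_prob_of_dpu [simp]: "shape (prob_of_dpu C) = shape C"
  by (induction C rule: prob_of_dpu.induct) auto

lemma shape_dpu_of_prob [simp]: "shape (dpu_of_prob Q) = shape Q"
  by (induction Q rule: dpu_of_prob.induct) auto

lemma pdim_prob_of_dpu [simp]: "pdim (prob_of_dpu C) = ddim C"
  by (induction C rule: prob_of_dpu.induct) auto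

lemma ddim_dpu_of_prob [simp]: "ddim (dpu_of_prob Q) = pdim Q"
  by (induction Q rule: dpu_of_prob.induct) auto

lemma sub_at_prob_of_dpu: "sub_at (prob_of_dpu C) p = prob_of_dpu (sub_at C p)"
  by (induction C p rule: sub_at.induct) auto

lemma sub_at_dpu_of_prob: "sub_at (dpu_of_prob Q) p = dpu_of_prob (sub_at Q p)"
  by (induction Q p rule: sub_at.induct) auto

lemma dpu_circuit_sub_at: "dpu_circuit \<Omega> C \<Longrightarrow> dpu_circuit \<Omega> (sub_at C p)"
  by (induction C p rule: sub_at.induct) auto

lemma prob_circuit_sub_at: "prob_circuit \<Omega> Q \<Longrightarrow> prob_circuit \<Omega> (sub_at Q p)"
  by (induction Q p rule: sub_at.induct) auto

lemma dim_peval_prob_of_dpu [simp]: "dim_vec (peval (prob_of_dpu C) x) = ddim C"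
  by (induction C rule: prob_of_dpu.induct) auto

lemma oeval_eq_mat_diag_peval:
  assumes "dpu_circuit \<Omega> C" "\<forall>i\<in>avars C. x i \<in> \<Omega> i"
  shows "oeval C x = mat_diag (ddim C) (\<lambda>i. of_real (peval (prob_of_dpu C) x $ i))"
  using assms
proof (induction C rule: prob_of_dpu.induct)
  case (1 k d \<Delta>)
  then have "\<Delta> (x k) \<in> carrier_mat d d" "diagonal_mat (\<Delta> (x k))" by auto
  then show ?case by (auto simp: diagonal_mult_ctrans intro!: mat_diag_cong)
next
  case (2 m D l r)
  have D: "D j = mat_diag (ddim l * ddim r) (\<lambda>a. D j $$ (a, a))" if "j < m" for j
    using 2(3) that by (intro diagonal_mat_eq_mat_diag) auto
  have "oeval l x = mat_diag (ddim l) (\<lambda>i. of_real (peval (prob_of_dpu l) x $ i))"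
    "oeval r x = mat_diag (ddim r) (\<lambda>i. of_real (peval (prob_of_dpu r) x $ i))"
    using 2 by auto
  from oeval_ANode_mat_diag[OF D this] show ?case
    by (auto simp: scalar_prod_def kron_vec_def atLeast0LessThan intro!: mat_diag_cong)
qed

lemma diagvec_oeval:
  assumes "dpu_circuit \<Omega> C" "\<forall>i\<in>avars C. x i \<in> \<Omega> i"
  shows "diagvec (oeval C x) = map_vec complex_of_real (peval (prob_of_dpu C) x)"
  unfolding oeval_eq_mat_diag_peval[OF assms] by (rule eq_vecI) auto

lemma prob_circuit_prob_of_dpu: "dpu_circuit \<Omega> C \<Longrightarrow> prob_circuit \<Omega> (prob_of_dpu C)"
proof (induction C rule: prob_of_dpu.induct)
  case (1 k d \<Delta>)
  have "msum d d (\<Omega> k) (\<lambda>x. \<Delta> x * ctrans (\<Delta> x))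
      = msum d d (\<Omega> k) (\<lambda>x. mat_diag d (\<lambda>i. of_real ((cmod (\<Delta> x $$ (i, i)))\<^sup>2)))"
    using 1 by (intro msum_cong diagonal_mult_ctrans) auto
  also have "\<dots> = mat_diag d (\<lambda>i. of_real (\<Sum>x\<in>\<Omega> k. (cmod (\<Delta> x $$ (i, i)))\<^sup>2))"
    by (simp only: msum_mat_diag of_real_sum)
  finally have unit: "mat_diag d (\<lambda>i. complex_of_real (\<Sum>x\<in>\<Omega> k. (cmod (\<Delta> x $$ (i, i)))\<^sup>2)) = 1\<^sub>m d"
    using 1 by simp
  have "(\<Sum>x\<in>\<Omega> k. (cmod (\<Delta> x $$ (i, i)))\<^sup>2) = 1" if "i < d" for i
    using arg_cong[where f = "\<lambda>A. A $$ (i, i)", OF unit] that by (simp del: of_real_sum of_real_power)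
  then show ?case
    by (auto simp: vsum_def)
next
  case (2 m D l r)
  have "(\<Sum>a<ddim l * ddim r. (cmod (D j $$ (a, a)))\<^sup>2) = 1" if "j < m" for j
  proof -
    have D: "D j \<in> carrier_mat (ddim l * ddim r) (ddim l * ddim r)" "diagonal_mat (D j)"
      and trace: "mtrace (D j * ctrans (D j)) = 1"
      using 2(3) that by auto
    from trace show ?thesis
      unfolding diagonal_mult_ctrans[OF D] mtrace_mat_diag of_real_sum[symmetric] by (simp only: of_real_eq_1_iff)
  qed
  then show ?case using 2 by auto
qed

lemma dpu_circuit_dpu_of_prob: "prob_circuit \<Omega> Q \<Longrightarrow> dpu_circuit \<Omega> (dpu_of_prob Q)"
proof (induction Q rule: dpu_of_prob.induct)
  case (1 k d P)
  then have unit: "vsum d (\<Omega> k) P = vec d (\<lambda>i. 1)" by simp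
  have sums: "(\<Sum>x\<in>\<Omega> k. P x $ i) = 1" if "i < d" for i
    using arg_cong[where f = "\<lambda>v. v $ i", OF unit] that by (simp add: vsum_def)
  have "msum d d (\<Omega> k) (\<lambda>x. mat_diag d (\<lambda>i. of_real (sqrt (P x $ i)))
                   * ctrans (mat_diag d (\<lambda>i. of_real (sqrt (P x $ i)))))
      = msum d d (\<Omega> k) (\<lambda>x. mat_diag d (\<lambda>i. of_real (P x $ i)))"
    using 1 by (intro msum_cong mat_diag_sqrt_mult_ctrans) auto
  also have "\<dots> = mat_diag d (\<lambda>i. 1)"
    unfolding msum_mat_diag using sums by (auto simp flip: of_real_sum intro!: mat_diag_cong)
  finally show ?case
    by (simp add: diagonal_mat_mat_diag)
next
  case (2 W l r)
  then have cols: "dim_col W = pdim l * pdim r" by auto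
  have "mtrace (mat_diag (pdim l * pdim r) (\<lambda>a. of_real (sqrt (W $$ (j, a))))
           * ctrans (mat_diag (pdim l * pdim r) (\<lambda>a. of_real (sqrt (W $$ (j, a)))))) = 1"
    if "j < dim_row W" for j
  proof -
    have row_sum: "(\<Sum>a<pdim l * pdim r. W $$ (j, a)) = 1"
      and nonneg: "\<And>a. a < pdim l * pdim r \<Longrightarrow> W $$ (j, a) \<ge> 0"
      using 2(3) that unfolding cols[symmetric] by auto
    have "mat_diag (pdim l * pdim r) (\<lambda>a. of_real (sqrt (W $$ (j, a))))
           * ctrans (mat_diag (pdim l * pdim r) (\<lambda>a. of_real (sqrt (W $$ (j, a)))))
        = mat_diag (pdim l * pdim r) (\<lambda>a. of_real (W $$ (j, a)))"
      using nonneg by (rule mat_diag_sqrt_mult_ctrans)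
    then show ?thesis
      using row_sum by (simp only: mtrace_mat_diag of_real_sum[symmetric] of_real_1)
  qed
  then show ?case using 2 by (auto simp: diagonal_mat_mat_diag)
qed

lemma peval_prob_of_dpu_dpu_of_prob:
  assumes "prob_circuit \<Omega> Q" "\<forall>i\<in>avars Q. x i \<in> \<Omega> i"
  shows "peval (prob_of_dpu (dpu_of_prob Q)) x = peval Q x"
  using assms
proof (induction Q rule: dpu_of_prob.induct)
  case (1 k d P)
  then have "x k \<in> \<Omega> k" by simp
  with 1(1) have "P (x k) \<in> carrier_vec d" "\<And>i. i < d \<Longrightarrow> P (x k) $ i \<ge> 0" by simp_all
  then show ?case by (auto intro!: eq_vecI)
next
  case (2 W l r)
  from 2(3) have cols: "dim_col W = pdim l * pdim r" by auto
  from 2(3) have nonneg: "\<forall>i<dim_row W. \<forall>j<dim_col W. W $$ (i, j) \<ge> 0" by simp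
  have "prob_of_dpu (dpu_of_prob (ANode W l r))
      = ANode W (prob_of_dpu (dpu_of_prob l)) (prob_of_dpu (dpu_of_prob r))"
    using nonneg by (auto simp: cols intro!: eq_matI)
  with 2 show ?case by simp
qed

lemma diagvec_oeval_sub_at_prob_of_dpu:
  assumes "dpu_circuit \<Omega> C" "\<forall>i\<in>avars (sub_at C p). x i \<in> \<Omega> i"
  shows "diagvec (oeval (sub_at C p) x) = map_vec complex_of_real (peval (sub_at (prob_of_dpu C) p) x)"
  using diagvec_oeval[OF dpu_circuit_sub_at[OF assms(1)] assms(2)] by (simp add: sub_at_prob_of_dpu)

lemma diagvec_oeval_sub_at_dpu_of_prob:
  assumes "prob_circuit \<Omega> Q" "\<forall>i\<in>avars (sub_at Q p). x i \<in> \<Omega> i"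
  shows "diagvec (oeval (sub_at (dpu_of_prob Q) p) x) = map_vec complex_of_real (peval (sub_at Q p) x)"
proof -
  have sub: "prob_circuit \<Omega> (sub_at Q p)" using assms(1) by (rule prob_circuit_sub_at)
  have "\<forall>i\<in>avars (dpu_of_prob (sub_at Q p)). x i \<in> \<Omega> i" using assms(2) by simp
  from diagvec_oeval[OF dpu_circuit_dpu_of_prob[OF sub] this] show ?thesis
    by (simp add: sub_at_dpu_of_prob peval_prob_of_dpu_dpu_of_prob[OF sub assms(2)])
qed

theorem proposition10:
  fixes N :: nat and T :: ptree and \<Omega> :: "nat \<Rightarrow> 'v set"
  assumes "partition_circuit N T"
    and "\<forall>k<N. finite (\<Omega> k)"
  shows "(\<forall>C :: 'v dpu_circuit. shape C = T \<and> dpu_circuit \<Omega> C \<longrightarrow>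
            (\<exists>Q :: 'v prob_circuit. shape Q = T \<and> prob_circuit \<Omega> Q \<and>
               (\<forall>p\<in>units T. \<forall>x. (\<forall>i\<in>avars (sub_at C p). x i \<in> \<Omega> i) \<longrightarrow>
                  map_vec complex_of_real (peval (sub_at Q p) x) = diagvec (oeval (sub_at C p) x))))
       \<and> (\<forall>Q :: 'v prob_circuit. shape Q = T \<and> prob_circuit \<Omega> Q \<longrightarrow>
            (\<exists>C :: 'v dpu_circuit. shape C = T \<and> dpu_circuit \<Omega> C \<and>
               (\<forall>p\<in>units T. \<forall>x. (\<forall>i\<in>avars (sub_at Q p). x i \<in> \<Omega> i) \<longrightarrow>
                  diagvec (oeval (sub_at C p) x) = map_vec complex_of_real (peval (sub_at Q p) x))))"
  \<comment> \<open>The translations work unit by unit.\<close>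
  by (metis shape_prob_of_dpu shape_dpu_of_prob prob_circuit_prob_of_dpu dpu_circuit_dpu_of_prob
      diagvec_oeval_sub_at_prob_of_dpu diagvec_oeval_sub_at_dpu_of_prob)

end
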